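(* Let $\lambda>0$ and let $\ell$ be a nondegenerate Hermitian form and $A$ an antilinear operator on a complex $k$-dimensional space, represented in some basis by matrices $H$ and $J_{\lambda,k}$ respectively, where $H$ is a Hankel matrix with $H_{i,j}=0$ for all $i+j\le k$. Then there is a basis with respect to which $\ell$ and $A$ are represented by $\pm S_k$ and $J_{\lambda,k}$ respectively.
   Context: An antilinear operator satisfies $A(zv+w)=\bar zAv+Aw$; $\ell$ is linear in the first argument, conjugate-linear in the second. In a basis $e_1,\dots,e_k$, $\ell$ is represented by $H_{i,j}=\ell(e_j,e_i)$ and $A$ by $C$ with $Ae_i=\sum_m C_{m,i}e_m$; a change of basis with transition matrix $M$ sends $(H,C)$ to $((M^{-1})^*HM^{-1},MC\overline M^{-1})$. $T_k$ has $(i,j)$ entry $1$ if $j-i=1$ and $0$ otherwise; $J_{\lambda,k}=\lambda I_k+T_k$; $S_k$ has $(i,j)$ entry $1$ if $i+j=k+1$ and $0$ otherwise. *)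

theory Defs
  imports Complex_Main "Jordan_Normal_Form.Matrix" "Jordan_Normal_Form.Determinant"
begin

(* Matrices are k x k complex matrices with 0-based indices; the paper's
   1-based conditions are shifted accordingly. *)

definition T_mat :: "nat \<Rightarrow> complex mat" where
  "T_mat k = mat k k (\<lambda>(i,j). if j = i + 1 then 1 else 0)"

definition J_mat :: "complex \<Rightarrow> nat \<Rightarrow> complex mat" where
  "J_mat lam k = lam \<cdot>\<^sub>m 1\<^sub>m k + T_mat k"

definition S_mat :: "nat \<Rightarrow> complex mat" where
  "S_mat k = mat k k (\<lambda>(i,j). if i + j + 1 = k then 1 else 0)"

definition conj_mat :: "complex mat \<Rightarrow> complex mat" where
  "conj_mat A = map_mat cnj A"

definition adj_mat :: "complex mat \<Rightarrow> complex mat" where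
  "adj_mat A = transpose_mat (map_mat cnj A)"

definition hermitian_mat :: "complex mat \<Rightarrow> bool" where
  "hermitian_mat H \<longleftrightarrow> adj_mat H = H"

definition hankel_mat :: "complex mat \<Rightarrow> bool" where
  "hankel_mat H \<longleftrightarrow> (\<forall>i j i' j'. i < dim_row H \<longrightarrow> j < dim_col H \<longrightarrow>
      i' < dim_row H \<longrightarrow> j' < dim_col H \<longrightarrow> i + j = i' + j' \<longrightarrow> H $$ (i,j) = H $$ (i',j'))"

end

theory Submission
  imports Defs "HOL-Computational_Algebra.Formal_Power_Series"
begin

text \<open>
  Upper triangular Toeplitz matrices with real entries form a commutative ring, namely
  the real power series truncated modulo \<open>X\<^sup>k\<close>, and they contain \<open>J\<^sub>\<lambda>\<^sub>,\<^sub>k\<close> (the image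
  of \<open>\<lambda> + X\<close>). A Hankel matrix vanishing above the antidiagonal is \<open>S\<^sub>k T\<^sub>p\<close> for such a
  Toeplitz matrix \<open>T\<^sub>p\<close>, and it is Hermitian exactly when \<open>p\<close> is real. Since \<open>T\<^sub>q\<^sup>* S\<^sub>k = S\<^sub>k T\<^sub>q\<close>
  for real \<open>q\<close>, the change of basis \<open>N = T\<^sub>q\<close> turns \<open>H\<close> into \<open>S\<^sub>k T\<^sub>q\<^sub>p\<^sub>q\<close>, while it fixes
  \<open>J\<^sub>\<lambda>\<^sub>,\<^sub>k\<close> because \<open>T\<^sub>q\<close> is real and commutes with it. Finally \<open>p\<close> is a unit since
  \<open>det H \<noteq> 0\<close>, so \<open>q = (\<plusminus>p\<^sup>-\<^sup>1)\<^sup>1\<^sup>/\<^sup>2\<close> with the sign of \<open>p\<^sub>0\<close> gives \<open>q p q = \<plusminus>1\<close>.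
\<close>

definition toeplitz_mat :: "nat \<Rightarrow> real fps \<Rightarrow> complex mat" where
  "toeplitz_mat k f = mat k k (\<lambda>(i,j). if i \<le> j then complex_of_real (fps_nth f (j - i)) else 0)"

lemma toeplitz_mat_carrier [simp]: "toeplitz_mat k f \<in> carrier_mat k k"
  and toeplitz_mat_dim [simp]: "dim_row (toeplitz_mat k f) = k" "dim_col (toeplitz_mat k f) = k"
  by (simp_all add: toeplitz_mat_def)

lemma toeplitz_mat_index:
  "i < k \<Longrightarrow> j < k \<Longrightarrow>
     toeplitz_mat k f $$ (i,j) = (if i \<le> j then complex_of_real (fps_nth f (j - i)) else 0)"
  by (simp add: toeplitz_mat_def)

lemma toeplitz_mat_mult: "toeplitz_mat k f * toeplitz_mat k g = toeplitz_mat k (f * g)"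
proof (rule eq_matI)
  fix i j assume "i < dim_row (toeplitz_mat k (f * g))" "j < dim_col (toeplitz_mat k (f * g))"
  then have i: "i < k" and j: "j < k" by auto
  have "(toeplitz_mat k f * toeplitz_mat k g) $$ (i,j) =
     (\<Sum>l\<in>{0..<k}. (if i \<le> l then complex_of_real (fps_nth f (l - i)) else 0) *
                    (if l \<le> j then complex_of_real (fps_nth g (j - l)) else 0))"
    using i j by (simp add: scalar_prod_def toeplitz_mat_index)
  also have "\<dots> = (\<Sum>l\<in>{i..j}. complex_of_real (fps_nth f (l - i) * fps_nth g (j - l)))"
    by (rule sum.mono_neutral_cong_right) (use j in auto)
  also have "\<dots> = (if i \<le> j then complex_of_real (fps_nth (f * g) (j - i)) else 0)"
  proof (cases "i \<le> j")
    case True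
    have "(\<Sum>l\<in>{i..j}. complex_of_real (fps_nth f (l - i) * fps_nth g (j - l)))
        = (\<Sum>m\<in>{0..j-i}. complex_of_real (fps_nth f m * fps_nth g (j - i - m)))"
      by (rule sum.reindex_bij_witness[of _ "\<lambda>m. m + i" "\<lambda>l. l - i"]) (use True in auto)
    then show ?thesis using True by (simp add: fps_mult_nth)
  qed simp
  finally show "(toeplitz_mat k f * toeplitz_mat k g) $$ (i,j) = toeplitz_mat k (f * g) $$ (i,j)"
    using i j by (simp add: toeplitz_mat_index)
qed auto

lemma toeplitz_mat_one: "toeplitz_mat k 1 = 1\<^sub>m k"
  by (rule eq_matI) (auto simp: toeplitz_mat_index)

lemma toeplitz_mat_uminus: "toeplitz_mat k (- f) = - toeplitz_mat k f"
  by (rule eq_matI) (auto simp: toeplitz_mat_index)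

lemma toeplitz_mat_inverse_mult:
  assumes "fps_nth f 0 \<noteq> 0"
  shows "toeplitz_mat k (inverse f) * toeplitz_mat k f = 1\<^sub>m k"
    and "toeplitz_mat k f * toeplitz_mat k (inverse f) = 1\<^sub>m k"
  using inverse_mult_eq_1[OF assms] inverse_mult_eq_1'[OF assms]
  by (simp_all add: toeplitz_mat_mult toeplitz_mat_one)

lemma J_mat_eq_toeplitz_mat: "J_mat (complex_of_real lam) k = toeplitz_mat k (fps_const lam + fps_X)"
  by (rule eq_matI) (auto simp: toeplitz_mat_index J_mat_def T_mat_def)

lemma conj_mat_toeplitz_mat: "conj_mat (toeplitz_mat k f) = toeplitz_mat k f"
  by (rule eq_matI) (auto simp: toeplitz_mat_index conj_mat_def)

lemma adj_mat_toeplitz_mat: "adj_mat (toeplitz_mat k f) = transpose_mat (toeplitz_mat k f)"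
  by (rule eq_matI) (auto simp: toeplitz_mat_index adj_mat_def)

lemma det_toeplitz_mat: "det (toeplitz_mat k f) = complex_of_real (fps_nth f 0) ^ k"
proof -
  have "upper_triangular (toeplitz_mat k f)"
    by (auto simp: upper_triangular_def toeplitz_mat_index)
  then have "det (toeplitz_mat k f) = prod_list (diag_mat (toeplitz_mat k f))"
    using det_upper_triangular toeplitz_mat_carrier by blast
  also have "diag_mat (toeplitz_mat k f) = map (\<lambda>_. complex_of_real (fps_nth f 0)) [0..<k]"
    by (simp add: diag_mat_def toeplitz_mat_index)
  finally show ?thesis
    by (simp add: map_replicate_const)
qed

lemma nonsingular_toeplitz_mat_unit:
  assumes "det (toeplitz_mat k p) \<noteq> 0"
  obtains p' where "fps_nth p' 0 \<noteq> 0" "toeplitz_mat k p' = toeplitz_mat k p"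
proof (cases "k = 0")
  case True
  then have "toeplitz_mat k 1 = toeplitz_mat k p"
    by (intro eq_matI) auto
  then show ?thesis
    using that[of 1] by simp
next
  case False
  then show ?thesis
    using that[of p] assms by (simp add: det_toeplitz_mat)
qed

lemma S_mat_carrier [simp]: "S_mat k \<in> carrier_mat k k"
  by (simp add: S_mat_def)

lemma S_mat_mult_index:
  assumes "B \<in> carrier_mat k k" "i < k" "j < k"
  shows "(S_mat k * B) $$ (i,j) = B $$ (k - 1 - i, j)"
proof -
  have "Suc (i + l) = k \<longleftrightarrow> l = k - 1 - i" for l using assms(2) by arith
  then show ?thesis
    using assms by (simp add: scalar_prod_def S_mat_def if_distrib[of "\<lambda>x. x * _"] cong: if_cong)
qed

lemma mult_S_mat_index:
  assumes "B \<in> carrier_mat k k" "i < k" "j < k"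
  shows "(B * S_mat k) $$ (i,j) = B $$ (i, k - 1 - j)"
proof -
  have "Suc (l + j) = k \<longleftrightarrow> l = k - 1 - j" for l using assms(3) by arith
  then show ?thesis
    using assms by (simp add: scalar_prod_def S_mat_def if_distrib[of "\<lambda>x. _ * x"] cong: if_cong)
qed

lemma transpose_toeplitz_mat_S_mat:
  "transpose_mat (toeplitz_mat k f) * S_mat k = S_mat k * toeplitz_mat k f"
proof (rule eq_matI)
  fix i j assume "i < dim_row (S_mat k * toeplitz_mat k f)" "j < dim_col (S_mat k * toeplitz_mat k f)"
  then have i: "i < k" and j: "j < k" by (auto simp: S_mat_def)
  have "toeplitz_mat k f $$ (k - 1 - j, i) = toeplitz_mat k f $$ (k - 1 - i, j)"
    using i j by (auto simp: toeplitz_mat_index) (metis add.commute)+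
  then show "(transpose_mat (toeplitz_mat k f) * S_mat k) $$ (i,j) = (S_mat k * toeplitz_mat k f) $$ (i,j)"
    using i j by (simp add: mult_S_mat_index S_mat_mult_index)
qed (auto simp: S_mat_def)

lemma adj_toeplitz_mat_congruence:
  "adj_mat (toeplitz_mat k q) * (S_mat k * toeplitz_mat k p) * toeplitz_mat k q
     = S_mat k * toeplitz_mat k (q * p * q)"
proof -
  have "adj_mat (toeplitz_mat k q) * (S_mat k * toeplitz_mat k p) * toeplitz_mat k q
      = (transpose_mat (toeplitz_mat k q) * S_mat k) * toeplitz_mat k p * toeplitz_mat k q"
    by (simp add: adj_mat_toeplitz_mat assoc_mult_mat[of _ k k _ k _ k])
  also have "\<dots> = S_mat k * toeplitz_mat k q * toeplitz_mat k p * toeplitz_mat k q"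
    by (simp add: transpose_toeplitz_mat_S_mat)
  also have "\<dots> = S_mat k * toeplitz_mat k (q * p * q)"
    by (simp add: assoc_mult_mat[of _ k k _ k _ k] toeplitz_mat_mult mult.assoc)
  finally show ?thesis .
qed

text \<open>
  The entries of \<open>H\<close> are constant along antidiagonals; those on or below the main
  antidiagonal are read off the last row, whose entries are real because \<open>H\<^sub>k\<^sub>-\<^sub>1\<^sub>,\<^sub>n\<close> and
  \<open>H\<^sub>n\<^sub>,\<^sub>k\<^sub>-\<^sub>1\<close> lie on the same antidiagonal.
\<close>

lemma hermitian_hankel_eq_S_mat_toeplitz_mat:
  assumes H: "H \<in> carrier_mat k k" "hermitian_mat H" "hankel_mat H"
    and upper_zero: "\<forall>i<k. \<forall>j<k. (i + 1) + (j + 1) \<le> k \<longrightarrow> H $$ (i,j) = 0"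
  shows "\<exists>p. H = S_mat k * toeplitz_mat k p"
proof -
  have hank: "H $$ (i,j) = H $$ (i',j')"
    if "i < k" "j < k" "i' < k" "j' < k" "i + j = i' + j'" for i j i' j'
    using H(3) that unfolding hankel_mat_def carrier_matD[OF H(1)] by blast
  have last_row_real: "complex_of_real (Re (H $$ (k - 1, n))) = H $$ (k - 1, n)" if "n < k" for n
  proof -
    have "adj_mat H $$ (k - 1, n) = cnj (H $$ (n, k - 1))"
      using H(1) that by (simp add: adj_mat_def)
    then have "H $$ (k - 1, n) = cnj (H $$ (k - 1, n))"
      using H(2) hank[of n "k - 1" "k - 1" n] that by (simp add: hermitian_mat_def)
    then show ?thesis by (metis complex_is_Real_iff Reals_cnj_iff of_real_Re)
  qed
  define p where "p = Abs_fps (\<lambda>n. if n < k then Re (H $$ (k - 1, n)) else 0)"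
  have "H = S_mat k * toeplitz_mat k p"
  proof (rule eq_matI)
    fix i j assume "i < dim_row (S_mat k * toeplitz_mat k p)" "j < dim_col (S_mat k * toeplitz_mat k p)"
    then have i: "i < k" and j: "j < k" by (auto simp: S_mat_def)
    have "H $$ (i,j) = toeplitz_mat k p $$ (k - 1 - i, j)"
    proof (cases "k - 1 - i \<le> j")
      case True
      define n where "n = j - (k - 1 - i)"
      have n: "n < k" "k - 1 + n = i + j" using True i j by (auto simp: n_def)
      have "H $$ (i,j) = H $$ (k - 1, n)" using hank[of "k - 1" n i j] n i j by simp
      also have "\<dots> = complex_of_real (fps_nth p n)" using n last_row_real by (simp add: p_def)
      finally show ?thesis using True i j by (simp add: toeplitz_mat_index n_def)
    next
      case False
      then have "H $$ (i,j) = 0"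
        using upper_zero i j by simp
      then show ?thesis
        using False i j by (simp add: toeplitz_mat_index)
    qed
    then show "H $$ (i,j) = (S_mat k * toeplitz_mat k p) $$ (i,j)"
      using i j by (simp add: S_mat_mult_index[OF toeplitz_mat_carrier])
  qed (use H(1) in \<open>auto simp: S_mat_def\<close>)
  then show ?thesis ..
qed

lemma fps_unit_congruent_sign:
  fixes p :: "real fps"
  assumes "fps_nth p 0 \<noteq> 0"
  shows "\<exists>q. fps_nth q 0 \<noteq> 0 \<and> (q * p * q = 1 \<or> q * p * q = -1)"
proof -
  define s where "s = sgn (fps_nth p 0)"
  define u where "u = fps_const s * inverse p"
  define q where "q = fps_radical (\<lambda>_. sqrt) 2 u"
  have u0: "fps_nth u 0 > 0"
    using assms by (auto simp: u_def s_def sgn_if)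
  have "q ^ 2 = u"
    using power_radical[of u "\<lambda>_. sqrt" 1] u0 by (simp add: q_def numeral_2_eq_2)
  then have "q * p * q = fps_const s * (inverse p * p)"
    by (simp add: u_def power2_eq_square algebra_simps)
  also have "\<dots> = fps_const s"
    using inverse_mult_eq_1[OF assms] by simp
  finally have "q * p * q = fps_const s" .
  moreover have "fps_nth q 0 \<noteq> 0"
    using u0 by (simp add: q_def)
  moreover have "fps_const s = 1 \<or> fps_const s = -1"
    using assms by (simp add: s_def sgn_if flip: fps_const_neg)
  ultimately show ?thesis
    by metis
qed

theorem mainTheorem8:
  fixes k :: nat and lam :: real and H :: "complex mat"
  assumes "lam > 0"
    and "H \<in> carrier_mat k k"
    and "hermitian_mat H"
    and "det H \<noteq> 0"
    and "hankel_mat H"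
    and "\<forall>i<k. \<forall>j<k. (i + 1) + (j + 1) \<le> k \<longrightarrow> H $$ (i,j) = 0"
  shows "\<exists>M N. M \<in> carrier_mat k k \<and> N \<in> carrier_mat k k \<and>
           M * N = 1\<^sub>m k \<and> N * M = 1\<^sub>m k \<and>
           (adj_mat N * H * N = S_mat k \<or> adj_mat N * H * N = - S_mat k) \<and>
           M * J_mat (complex_of_real lam) k * conj_mat N = J_mat (complex_of_real lam) k"
proof -
  obtain p where H: "H = S_mat k * toeplitz_mat k p"
    using hermitian_hankel_eq_S_mat_toeplitz_mat assms(2,3,5,6) by blast
  have "det (toeplitz_mat k p) \<noteq> 0"
    using assms(4) by (simp add: H det_mult[OF S_mat_carrier toeplitz_mat_carrier])
  then obtain p' where "fps_nth p' 0 \<noteq> 0" and H': "H = S_mat k * toeplitz_mat k p'"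
    using nonsingular_toeplitz_mat_unit H by metis
  then obtain q where q0: "fps_nth q 0 \<noteq> 0" and qpq: "q * p' * q = 1 \<or> q * p' * q = -1"
    using fps_unit_congruent_sign by blast
  define N where "N = toeplitz_mat k q"
  define M where "M = toeplitz_mat k (inverse q)"
  have "adj_mat N * H * N = S_mat k * toeplitz_mat k (q * p' * q)"
    by (simp add: N_def H' adj_toeplitz_mat_congruence)
  then have "adj_mat N * H * N = S_mat k \<or> adj_mat N * H * N = - S_mat k"
    using qpq by (auto simp: toeplitz_mat_uminus toeplitz_mat_one S_mat_def)
  moreover have "M * J_mat (complex_of_real lam) k * conj_mat N = J_mat (complex_of_real lam) k"
    using q0 by (simp add: M_def N_def J_mat_eq_toeplitz_mat conj_mat_toeplitz_mat toeplitz_mat_mult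
        mult.commute[of "inverse q"] mult.assoc inverse_mult_eq_1')
  ultimately show ?thesis
    using toeplitz_mat_inverse_mult[OF q0]
    by (intro exI[of _ M] exI[of _ N] conjI) (simp_all add: M_def N_def)
qed

end
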